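(* In the noiseless case $\alpha=0$, let $\mathbf{W}_t$ be the Muon iterates with learning rate $\eta=1$ started from $\mathbf{W}_0=\mathbf{0}$, and let $\widehat{\mathbf{W}}_t=\widetilde{\mathbf{E}}^\top\mathbf{W}_t\mathbf{E}$. Then for every $t\ge0$, partitioning $\widehat{\mathbf{W}}_t$ into $M^2$ blocks $(\mathbf{B}_t)_{i,j}\in\mathbb{R}^{C\times C}$ (block $(i,j)$ has rows $(i-1)C+1,\dots,iC$ and columns $(j-1)C+1,\dots,jC$): each diagonal block has the form $(\mathbf{B}_t)_{i,i}=\omega_{i,t}\mathbf{I}_C+\mu_{i,t}(\mathbf{J}_C-\mathbf{I}_C)$, and each off-diagonal block ($i\ne j$) has the form $(\mathbf{B}_t)_{i,j}=\gamma_{i,j,t}\mathbf{J}_C$, for real numbers $\omega_{i,t}=(\widehat{\mathbf{W}}_t)_{C(i-1)+1,C(i-1)+1}$, $\mu_{i,t}=(\widehat{\mathbf{W}}_t)_{C(i-1)+2,C(i-1)+1}$, $\gamma_{i,j,t}=(\widehat{\mathbf{W}}_t)_{C(i-1)+1,C(j-1)+1}$.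
   Context: Setup: $K=MC$ items in $M$ groups of $C\ge2$ items; $\widetilde p_1>\dots>\widetilde p_M>0$, $\sum_i\widetilde p_i=1$, $p_j=\widetilde p_i/C$ for $j\in\{(i-1)C+1,\dots,iC\}$. $\mathbf{E},\widetilde{\mathbf{E}}\in\mathbb{R}^{K\times K}$ are orthogonal with columns $\mathbf{E}_j,\widetilde{\mathbf{E}}_j$. Noiseless labels: $p_{i\mid j}=1$ if $i=j$, $0$ otherwise. $\widehat p_{i\mid j}(\mathbf{W})=\exp(\widetilde{\mathbf{E}}_i^\top\mathbf{W}\mathbf{E}_j)/\sum_k\exp(\widetilde{\mathbf{E}}_k^\top\mathbf{W}\mathbf{E}_j)$; $\mathcal{L}(\mathbf{W})=-\sum_jp_j\log\widehat p_{j\mid j}(\mathbf{W})$. Muon: $\mathbf{W}_{t+1}=\mathbf{W}_t-\eta\,\mathrm{msgn}(\nabla\mathcal{L}(\mathbf{W}_t))$, $\mathrm{msgn}(\mathbf{U}\boldsymbol\Sigma\mathbf{V}^\top)=\mathbf{U}\,\mathrm{sgn}(\boldsymbol\Sigma)\mathbf{V}^\top$. $\mathbf{J}_C$ is the $C\times C$ all-ones matrix. *)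

theory Defs
  imports "HOL-Analysis.Analysis"
begin

text \<open>K x K real matrices are represented as functions nat => nat => real; only the
  entries with indices < K are meaningful. Indices are 0-based.\<close>

type_synonym mat = "nat \<Rightarrow> nat \<Rightarrow> real"

definition mmul :: "nat \<Rightarrow> mat \<Rightarrow> mat \<Rightarrow> mat" where
  "mmul K A B = (\<lambda>i j. \<Sum>k<K. A i k * B k j)"

definition mtrans :: "mat \<Rightarrow> mat" where
  "mtrans A = (\<lambda>i j. A j i)"

definition orthogonal_mat :: "nat \<Rightarrow> mat \<Rightarrow> bool" where
  "orthogonal_mat K U \<longleftrightarrow>
     (\<forall>i<K. \<forall>j<K. (\<Sum>k<K. U k i * U k j) = (if i = j then 1 else 0))"

definition is_svd :: "nat \<Rightarrow> mat \<Rightarrow> mat \<Rightarrow> mat \<Rightarrow> mat \<Rightarrow> bool" where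
  "is_svd K G U S V \<longleftrightarrow> orthogonal_mat K U \<and> orthogonal_mat K V \<and>
     (\<forall>i<K. \<forall>j<K. i \<noteq> j \<longrightarrow> S i j = 0) \<and> (\<forall>i<K. S i i \<ge> 0) \<and>
     (\<forall>i<K. \<forall>j<K. G i j = mmul K (mmul K U S) (mtrans V) i j)"

text \<open>Matrix sign: msgn(U S V^T) = U sgn(S) V^T (independent of the chosen SVD).\<close>
definition msgn :: "nat \<Rightarrow> mat \<Rightarrow> mat" where
  "msgn K G = (case (SOME (U, S, V). is_svd K G U S V) of (U, S, V) \<Rightarrow>
      mmul K (mmul K U (\<lambda>i j. sgn (S i j))) (mtrans V))"

definition logit :: "nat \<Rightarrow> mat \<Rightarrow> mat \<Rightarrow> mat \<Rightarrow> nat \<Rightarrow> nat \<Rightarrow> real" where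
  "logit K Et E W i j = (\<Sum>a<K. \<Sum>b<K. Et a i * W a b * E b j)"

definition phat :: "nat \<Rightarrow> mat \<Rightarrow> mat \<Rightarrow> mat \<Rightarrow> nat \<Rightarrow> nat \<Rightarrow> real" where
  "phat K Et E W i j = exp (logit K Et E W i j) / (\<Sum>k<K. exp (logit K Et E W k j))"

definition loss :: "nat \<Rightarrow> (nat \<Rightarrow> real) \<Rightarrow> mat \<Rightarrow> mat \<Rightarrow> mat \<Rightarrow> real" where
  "loss K p Et E W = - (\<Sum>j<K. p j * ln (phat K Et E W j j))"

definition grad :: "(mat \<Rightarrow> real) \<Rightarrow> mat \<Rightarrow> mat" where
  "grad L W = (\<lambda>a b. deriv (\<lambda>s. L (\<lambda>x y. W x y + s * (if x = a \<and> y = b then 1 else 0))) 0)"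

primrec muon :: "nat \<Rightarrow> (mat \<Rightarrow> real) \<Rightarrow> real \<Rightarrow> mat \<Rightarrow> nat \<Rightarrow> mat" where
  "muon K L eta W0 0 = W0"
| "muon K L eta W0 (Suc t) =
     (\<lambda>a b. muon K L eta W0 t a b - eta * msgn K (grad L (muon K L eta W0 t)) a b)"

end

(*
  Write Wh = Et^T W E for the logit matrix. The gradient of the loss is Et R E^T, where
  R k j = p j * (phat k j - [k = j]) depends on W only through Wh. Interpolating 1 / sqrt at the
  squared singular values shows msgn G = sum_k c_k G (G^T G)^k, so Et^T msgn(grad L) E is an odd
  polynomial of the same shape in R. Hence if Wh_t is invariant under a simultaneous permutation
  sigma of rows and columns with p o sigma = p, then so are R, the Muon update and Wh_(t+1).
  Transpositions inside one group of C items preserve p, and invariance under all of them forces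
  the block pattern. An SVD, which makes msgn meaningful, exists by the spectral theorem for real
  symmetric matrices.
*)

theory Submission
  imports Defs "Jordan_Normal_Form.Char_Poly" "HOL-Computational_Algebra.Fundamental_Theorem_Algebra"
begin

hide_type (open) Matrix.mat
hide_const (open) Matrix.orthogonal_mat

definition mat_eq_on :: "nat \<Rightarrow> mat \<Rightarrow> mat \<Rightarrow> bool" where
  "mat_eq_on n A B \<longleftrightarrow> (\<forall>i<n. \<forall>j<n. A i j = B i j)"

definition symmetric_mat :: "nat \<Rightarrow> mat \<Rightarrow> bool" where
  "symmetric_mat n A \<longleftrightarrow> (\<forall>i<n. \<forall>j<n. A i j = A j i)"

definition dot :: "nat \<Rightarrow> (nat \<Rightarrow> real) \<Rightarrow> (nat \<Rightarrow> real) \<Rightarrow> real" where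
  "dot n x y = (\<Sum>k<n. x k * y k)"

definition mat_vec :: "nat \<Rightarrow> mat \<Rightarrow> (nat \<Rightarrow> real) \<Rightarrow> nat \<Rightarrow> real" where
  "mat_vec n A x = (\<lambda>i. \<Sum>k<n. A i k * x k)"

lemma mmul_assoc: "mmul n (mmul n A B) C = mmul n A (mmul n B C)"
proof (intro ext)
  fix i j
  have "mmul n (mmul n A B) C i j = (\<Sum>k<n. \<Sum>l<n. A i l * B l k * C k j)"
    unfolding mmul_def by (simp add: sum_distrib_right)
  also have "\<dots> = (\<Sum>l<n. \<Sum>k<n. A i l * B l k * C k j)"
    by (rule sum.swap)
  also have "\<dots> = mmul n A (mmul n B C) i j"
    unfolding mmul_def by (simp add: sum_distrib_left mult_ac)
  finally show "mmul n (mmul n A B) C i j = mmul n A (mmul n B C) i j" .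
qed

lemma mtrans_mmul: "mtrans (mmul n A B) = mmul n (mtrans B) (mtrans A)"
  unfolding mtrans_def mmul_def by (simp add: mult.commute)

lemma mtrans_mtrans [simp]: "mtrans (mtrans A) = A"
  unfolding mtrans_def by simp

lemma mmul_conj_diff:
  "mmul n (mmul n A (\<lambda>i j. X i j - c * Y i j)) B i j
     = mmul n (mmul n A X) B i j - c * mmul n (mmul n A Y) B i j"
  unfolding mmul_def by (simp add: algebra_simps sum_subtractf sum_distrib_left)

lemma mmul_lincomb:
  "mmul n (mmul n A (\<lambda>i j. \<Sum>k<N. c k * F k i j)) B i j
     = (\<Sum>k<N. c k * mmul n (mmul n A (F k)) B i j)"
proof -
  have "mmul n (mmul n A (\<lambda>i j. \<Sum>k<N. c k * F k i j)) B i j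
      = (\<Sum>a<n. \<Sum>b<n. \<Sum>k<N. c k * (A i b * F k b a * B a j))"
    unfolding mmul_def by (simp add: sum_distrib_left sum_distrib_right mult_ac)
  also have "\<dots> = (\<Sum>k<N. \<Sum>a<n. \<Sum>b<n. c k * (A i b * F k b a * B a j))"
    by (subst sum.swap) (simp add: sum.swap[of _ "{..<N}"])
  also have "\<dots> = (\<Sum>k<N. c k * mmul n (mmul n A (F k)) B i j)"
    unfolding mmul_def by (simp add: sum_distrib_left sum_distrib_right mult_ac)
  finally show ?thesis .
qed

lemma mmul_mat_eq_on_middle:
  "mat_eq_on n X Y \<Longrightarrow> mmul n (mmul n A X) B = mmul n (mmul n A Y) B"
  unfolding mat_eq_on_def mmul_def by simp

lemma mmul_diagonal_right:
  assumes "\<forall>i<n. \<forall>j<n. i \<noteq> j \<longrightarrow> S i j = 0" and "l < n"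
  shows "mmul n U S i l = U i l * S l l"
proof -
  have "mmul n U S i l = (\<Sum>m<n. if m = l then U i m * S m l else 0)"
    unfolding mmul_def using assms by (intro sum.cong) auto
  also have "\<dots> = U i l * S l l"
    using assms(2) by simp
  finally show ?thesis .
qed

lemma mmul_diagonal_mtrans:
  assumes "\<forall>i<n. \<forall>j<n. i \<noteq> j \<longrightarrow> S i j = 0"
  shows "mmul n (mmul n U S) (mtrans V) i j = (\<Sum>l<n. U i l * S l l * V j l)"
  unfolding mmul_def[of n "mmul n U S"] mtrans_def
  using mmul_diagonal_right[OF assms] by simp

lemma dot_commute: "dot n x y = dot n y x"
  unfolding dot_def by (simp add: mult.commute)

lemma dot_self_nonneg: "dot n x x \<ge> 0"
  unfolding dot_def by (intro sum_nonneg) simp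

lemma dot_self_eq_0D: "dot n x x = 0 \<Longrightarrow> k < n \<Longrightarrow> x k = 0"
  unfolding dot_def using sum_nonneg_eq_0_iff[of "{..<n}" "\<lambda>k. x k * x k"] by simp

lemma dot_cong:
  "(\<And>r. r < n \<Longrightarrow> x r = x' r) \<Longrightarrow> (\<And>r. r < n \<Longrightarrow> y r = y' r) \<Longrightarrow> dot n x y = dot n x' y'"
  unfolding dot_def by simp

lemma dot_scale_left: "dot n (\<lambda>r. c * x r) y = c * dot n x y"
  unfolding dot_def by (simp add: sum_distrib_left mult_ac)

lemma dot_scale_right: "dot n x (\<lambda>r. c * y r) = c * dot n x y"
  unfolding dot_def by (simp add: sum_distrib_left mult_ac)

lemma dot_sum_right: "dot n x (\<lambda>r. \<Sum>b\<in>S. c b * w b r) = (\<Sum>b\<in>S. c b * dot n x (w b))"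
  unfolding dot_def by (simp add: sum_distrib_left sum.swap[of _ S] mult_ac)

lemma mat_vec_scale: "mat_vec n A (\<lambda>r. c * x r) i = c * mat_vec n A x i"
  unfolding mat_vec_def by (simp add: sum_distrib_left mult_ac)

lemma mat_vec_sum:
  "mat_vec n A (\<lambda>r. \<Sum>b\<in>S. c b * w b r) i = (\<Sum>b\<in>S. c b * mat_vec n A (w b) i)"
  unfolding mat_vec_def by (simp add: sum_distrib_left sum.swap[of _ S] mult_ac)

lemma dot_mat_vec_symmetric:
  assumes "symmetric_mat n A"
  shows "dot n x (mat_vec n A y) = dot n (mat_vec n A x) y"
proof -
  have "dot n x (mat_vec n A y) = (\<Sum>k<n. \<Sum>l<n. x k * A k l * y l)"
    unfolding dot_def mat_vec_def by (simp add: sum_distrib_left mult_ac)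
  also have "\<dots> = (\<Sum>l<n. \<Sum>k<n. A l k * x k * y l)"
    using assms unfolding symmetric_mat_def by (subst sum.swap) (simp add: mult_ac)
  also have "\<dots> = dot n (mat_vec n A x) y"
    unfolding dot_def mat_vec_def by (simp add: sum_distrib_right)
  finally show ?thesis .
qed

lemma orthogonal_mat_dot:
  assumes "orthogonal_mat n V"
  shows "dot n (mat_vec n V x) (mat_vec n V y) = dot n x y"
proof -
  have "dot n (mat_vec n V x) (mat_vec n V y) = (\<Sum>b<n. \<Sum>l'<n. \<Sum>l<n. x l * y l' * (V b l * V b l'))"
    unfolding dot_def mat_vec_def by (simp add: sum_distrib_left sum_distrib_right mult_ac)
  also have "\<dots> = (\<Sum>l'<n. \<Sum>l<n. x l * y l' * (\<Sum>b<n. V b l * V b l'))"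
    by (subst sum.swap, rule sum.cong[OF refl], subst sum.swap) (simp add: sum_distrib_left)
  also have "\<dots> = (\<Sum>l'<n. \<Sum>l<n. if l = l' then x l * y l' else 0)"
    using assms unfolding Defs.orthogonal_mat_def by (intro sum.cong refl) auto
  also have "\<dots> = dot n x y"
    unfolding dot_def by simp
  finally show ?thesis .
qed

lemma mmul_mtrans_orthogonal_cancel:
  assumes "orthogonal_mat n E"
  shows "mmul n (mmul n X (mtrans E)) (mmul n E Y) = mmul n X Y"
proof (intro ext)
  fix i j
  show "mmul n (mmul n X (mtrans E)) (mmul n E Y) i j = mmul n X Y i j"
    using orthogonal_mat_dot[OF assms, of "X i" "\<lambda>m. Y m j"]
    unfolding mmul_def mtrans_def dot_def mat_vec_def by (simp add: mult_ac)
qed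

lemma orthogonal_mat_cancel_left:
  assumes "orthogonal_mat n E" and "i < n"
  shows "mmul n (mtrans E) (mmul n E Y) i j = Y i j"
proof -
  have "mmul n (mtrans E) E i k = (if i = k then 1 else 0)" if "k < n" for k
    using assms(1)[unfolded Defs.orthogonal_mat_def, rule_format, OF assms(2) that]
    unfolding mmul_def mtrans_def .
  then have "mmul n (mmul n (mtrans E) E) Y i j = (\<Sum>k<n. if i = k then Y k j else 0)"
    unfolding mmul_def[of n "mmul n (mtrans E) E"] by (intro sum.cong) auto
  also have "\<dots> = Y i j"
    using assms(2) by simp
  finally show ?thesis
    by (simp add: mmul_assoc)
qed

lemma orthogonal_mat_cancel_right:
  assumes "orthogonal_mat n E" and "j < n"
  shows "mmul n (mmul n X (mtrans E)) E i j = X i j"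
proof -
  have "mmul n (mtrans E) E k j = (if k = j then 1 else 0)" if "k < n" for k
    using assms(1)[unfolded Defs.orthogonal_mat_def, rule_format, OF that assms(2)]
    unfolding mmul_def mtrans_def .
  then have "mmul n X (mmul n (mtrans E) E) i j = (\<Sum>k<n. X i k * (if k = j then 1 else 0))"
    unfolding mmul_def[of n X] by simp
  also have "\<dots> = X i j"
    using assms(2) by (simp add: if_distrib cong: if_cong)
  finally show ?thesis
    by (simp add: mmul_assoc)
qed

lemma orthogonal_mat_conj_cancel:
  assumes "orthogonal_mat n Et" and "orthogonal_mat n E"
  shows "mat_eq_on n (mmul n (mmul n (mtrans Et) (mmul n (mmul n Et X) (mtrans E))) E) X"
  unfolding mat_eq_on_def
proof (intro allI impI)
  fix i j assume i: "i < n" and j: "j < n"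
  have "mmul n (mmul n (mtrans Et) (mmul n (mmul n Et X) (mtrans E))) E i j
      = mmul n (mmul n X (mtrans E)) E i j"
    unfolding mmul_def[of n "mmul n (mtrans Et) _"] mmul_assoc[of n Et X]
    using orthogonal_mat_cancel_left[OF assms(1) i] by (simp add: mmul_def[of n "mmul n X _"])
  also have "\<dots> = X i j"
    using orthogonal_mat_cancel_right[OF assms(2) j] .
  finally show "mmul n (mmul n (mtrans Et) (mmul n (mmul n Et X) (mtrans E))) E i j = X i j" .
qed

section \<open>Orthonormal families\<close>

definition orthonormal :: "nat \<Rightarrow> nat set \<Rightarrow> (nat \<Rightarrow> nat \<Rightarrow> real) \<Rightarrow> bool" where
  "orthonormal n I u \<longleftrightarrow> (\<forall>i\<in>I. \<forall>j\<in>I. dot n (u i) (u j) = (if i = j then 1 else 0))"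

definition residual :: "nat \<Rightarrow> nat set \<Rightarrow> (nat \<Rightarrow> nat \<Rightarrow> real) \<Rightarrow> (nat \<Rightarrow> real) \<Rightarrow> nat \<Rightarrow> real" where
  "residual n I u y = (\<lambda>k. y k - (\<Sum>i\<in>I. dot n (u i) y * u i k))"

definition std_basis :: "nat \<Rightarrow> nat \<Rightarrow> real" where
  "std_basis j = (\<lambda>k. if k = j then 1 else 0)"

lemma dot_std_basis_right: "j < n \<Longrightarrow> dot n x (std_basis j) = x j"
  unfolding dot_def std_basis_def by (simp add: if_distrib cong: if_cong)

lemma orthogonal_mat_iff_orthonormal:
  "orthogonal_mat n U \<longleftrightarrow> orthonormal n {..<n} (\<lambda>j r. U r j)"
  unfolding Defs.orthogonal_mat_def orthonormal_def dot_def by auto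

lemma dot_residual_right:
  "dot n x (residual n I u y) = dot n x y - (\<Sum>i\<in>I. dot n (u i) y * dot n x (u i))"
proof -
  have "dot n x (\<lambda>k. \<Sum>i\<in>I. dot n (u i) y * u i k) = (\<Sum>i\<in>I. dot n (u i) y * dot n x (u i))"
    by (rule dot_sum_right)
  then show ?thesis
    unfolding residual_def dot_def by (simp add: right_diff_distrib sum_subtractf)
qed

lemma orthonormal_dot_residual:
  assumes "finite I" "orthonormal n I u" "j \<in> I"
  shows "dot n (u j) (residual n I u y) = 0"
proof -
  have "(\<Sum>i\<in>I. dot n (u i) y * dot n (u j) (u i)) = (\<Sum>i\<in>I. if i = j then dot n (u j) y else 0)"
    using assms(2,3) unfolding orthonormal_def by (intro sum.cong) auto
  then show ?thesis
    using assms(1,3) by (simp add: dot_residual_right)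
qed

lemma dot_residual_self:
  assumes "finite I" "orthonormal n I u"
  shows "dot n (residual n I u y) (residual n I u y) = dot n y y - (\<Sum>i\<in>I. (dot n (u i) y)\<^sup>2)"
proof -
  let ?r = "residual n I u y"
  have "(\<Sum>i\<in>I. dot n (u i) y * dot n ?r (u i)) = 0"
    using orthonormal_dot_residual[OF assms] by (simp add: dot_commute[of n ?r])
  then have "dot n ?r ?r = dot n y ?r"
    using dot_residual_right[of n ?r I u y] by (simp add: dot_commute[of n ?r y])
  also have "\<dots> = dot n y y - (\<Sum>i\<in>I. (dot n (u i) y)\<^sup>2)"
    unfolding dot_residual_right by (simp add: dot_commute[of n y "u _"] power2_eq_square)
  finally show ?thesis .
qed

text \<open>Bessel's identity summed over the standard basis: a positive sum leaves room for one more
  orthonormal vector, a zero sum means the family spans.\<close>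

lemma sum_dot_residual_std_basis:
  assumes "finite I" "orthonormal n I u"
  shows "(\<Sum>j<n. dot n (residual n I u (std_basis j)) (residual n I u (std_basis j)))
           = real n - real (card I)"
proof -
  have "(\<Sum>j<n. dot n (residual n I u (std_basis j)) (residual n I u (std_basis j)))
      = (\<Sum>j<n. 1 - (\<Sum>i\<in>I. u i j * u i j))"
    unfolding dot_residual_self[OF assms]
    by (intro sum.cong refl) (simp add: dot_std_basis_right power2_eq_square, simp add: std_basis_def)
  also have "\<dots> = real n - (\<Sum>i\<in>I. dot n (u i) (u i))"
    unfolding dot_def sum_subtractf by (subst sum.swap) simp
  also have "(\<Sum>i\<in>I. dot n (u i) (u i)) = real (card I)"
    using assms(2) unfolding orthonormal_def by simp
  finally show ?thesis .
qed

lemma exists_unit_multiple: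
  assumes "dot n x x \<noteq> 0"
  obtains c where "dot n (\<lambda>r. c * x r) (\<lambda>r. c * x r) = 1"
proof
  have "dot n x x > 0"
    using assms dot_self_nonneg[of n x] by simp
  then show "dot n (\<lambda>r. 1 / sqrt (dot n x x) * x r) (\<lambda>r. 1 / sqrt (dot n x x) * x r) = 1"
    unfolding dot_scale_left dot_scale_right by (simp add: field_simps)
qed

lemma orthonormal_insert:
  assumes "orthonormal n I u" "dot n x x = 1" "\<forall>i\<in>I. dot n (u i) x = 0"
  shows "orthonormal n (insert j I) (u(j := x))"
  unfolding orthonormal_def
proof (intro ballI)
  fix i k assume "i \<in> insert j I" "k \<in> insert j I"
  then consider "i = j" "k = j" | "i = j" "k \<in> I" "k \<noteq> j" | "i \<in> I" "i \<noteq> j" "k = j"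
    | "i \<in> I" "k \<in> I" "i \<noteq> j" "k \<noteq> j"
    by blast
  then show "dot n ((u(j := x)) i) ((u(j := x)) k) = (if i = k then 1 else 0)"
  proof cases
    case 1
    then show ?thesis
      using assms(2) by simp
  next
    case 2
    then have "dot n x (u k) = 0"
      using assms(3) dot_commute[of n x "u k"] by simp
    then show ?thesis
      using 2 by simp
  next
    case 3
    then show ?thesis
      using assms(3) by simp
  next
    case 4
    then show ?thesis
      using assms(1) unfolding orthonormal_def by simp
  qed
qed

lemma orthonormal_extend:
  assumes "finite I" "orthonormal n I u" "card I < n"
  obtains x where "dot n x x = 1" "\<forall>i\<in>I. dot n (u i) x = 0"
proof -
  let ?r = "\<lambda>j. residual n I u (std_basis j)"
  have "(\<Sum>j<n. dot n (?r j) (?r j)) \<noteq> 0"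
    using sum_dot_residual_std_basis[OF assms(1,2)] assms(3) by simp
  then obtain j where "dot n (?r j) (?r j) \<noteq> 0"
    by (rule sum.not_neutral_contains_not_neutral)
  then obtain c where "dot n (\<lambda>k. c * ?r j k) (\<lambda>k. c * ?r j k) = 1"
    by (rule exists_unit_multiple)
  moreover have "\<forall>i\<in>I. dot n (u i) (\<lambda>k. c * ?r j k) = 0"
    using orthonormal_dot_residual[OF assms(1,2)] by (simp add: dot_scale_right)
  ultimately show ?thesis
    using that by blast
qed

lemma orthonormal_complete:
  assumes "I \<subseteq> {..<n}" "orthonormal n I u"
  obtains u' where "\<forall>i\<in>I. u' i = u i" "orthonormal n {..<n} u'"
  using assms
proof (induction "n - card I" arbitrary: I u thesis)
  case 0
  have "card I \<le> n"
    using card_mono[OF finite_lessThan "0.prems"(2)] by simp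
  then have "I = {..<n}"
    using "0.hyps" card_subset_eq[OF finite_lessThan "0.prems"(2)] by simp
  then show ?case
    using "0.prems" by blast
next
  case (Suc d)
  have fin: "finite I"
    using Suc.prems(2) finite_subset by blast
  have "card I < n"
    using Suc.hyps(2) by simp
  then have "I \<noteq> {..<n}"
    by auto
  then obtain j where j: "j < n" "j \<notin> I"
    using Suc.prems(2) by blast
  obtain x where "dot n x x = 1" "\<forall>i\<in>I. dot n (u i) x = 0"
    using orthonormal_extend[OF fin Suc.prems(3) \<open>card I < n\<close>] .
  then have "orthonormal n (insert j I) (u(j := x))"
    by (rule orthonormal_insert[OF Suc.prems(3)])
  moreover have "d = n - card (insert j I)"
    using Suc.hyps(2) j fin by simp
  moreover have "insert j I \<subseteq> {..<n}"
    using Suc.prems(2) j by simp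
  ultimately obtain u' where u': "\<forall>i\<in>insert j I. u' i = (u(j := x)) i" "orthonormal n {..<n} u'"
    using Suc.hyps(1) by blast
  have "\<forall>i\<in>I. u' i = u i"
    using u'(1) j(2) by auto
  then show ?case
    using Suc.prems(1) u'(2) by blast
qed

lemma orthonormal_rows:
  assumes "orthonormal n {..<n} u" "j < n" "k < n"
  shows "(\<Sum>i<n. u i j * u i k) = (if j = k then 1 else 0)"
proof -
  let ?r = "\<lambda>j. residual n {..<n} u (std_basis j)"
  have "(\<Sum>j<n. dot n (?r j) (?r j)) = 0"
    using sum_dot_residual_std_basis[OF _ assms(1)] by simp
  then have "dot n (?r j) (?r j) = 0"
    using assms(2) by (simp add: sum_nonneg_eq_0_iff dot_self_nonneg)
  then have "?r j k = 0"
    using assms(3) by (rule dot_self_eq_0D)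
  moreover have "dot n (u i) (std_basis j) = u i j" for i
    using dot_std_basis_right[OF assms(2)] .
  ultimately have "std_basis j k = (\<Sum>i<n. u i j * u i k)"
    unfolding residual_def by simp
  then show ?thesis
    unfolding std_basis_def by (simp split: if_splits)
qed

lemma orthonormal_expansion:
  assumes "orthonormal n {..<n} u" "k < n"
  shows "y k = (\<Sum>i<n. dot n (u i) y * u i k)"
proof -
  have "(\<Sum>i<n. dot n (u i) y * u i k) = (\<Sum>l<n. y l * (\<Sum>i<n. u i l * u i k))"
    unfolding dot_def sum_distrib_right sum_distrib_left by (subst sum.swap) (simp add: mult_ac)
  also have "\<dots> = (\<Sum>l<n. if l = k then y l else 0)"
    using orthonormal_rows[OF assms(1) _ assms(2)] by (intro sum.cong) auto
  also have "\<dots> = y k"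
    using assms(2) by simp
  finally show ?thesis by simp
qed

lemma dot_orthonormal_combination:
  assumes "finite S" "orthonormal n S w"
  shows "dot n (\<lambda>r. \<Sum>b\<in>S. y b * w b r) (\<lambda>r. \<Sum>b\<in>S. y b * w b r) = (\<Sum>b\<in>S. (y b)\<^sup>2)"
proof -
  have "dot n (\<lambda>r. \<Sum>b\<in>S. y b * w b r) (w a) = y a" if "a \<in> S" for a
  proof -
    have "dot n (\<lambda>r. \<Sum>b\<in>S. y b * w b r) (w a) = (\<Sum>b\<in>S. y b * dot n (w a) (w b))"
      by (subst dot_commute) (rule dot_sum_right)
    also have "\<dots> = (\<Sum>b\<in>S. if b = a then y b else 0)"
      using assms(2) that unfolding orthonormal_def by (intro sum.cong) auto
    finally show ?thesis
      using assms(1) that by simp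
  qed
  then show ?thesis
    by (simp add: dot_sum_right power2_eq_square)
qed

section \<open>The spectral theorem and the singular value decomposition\<close>

lemma complex_eigenvector_exists:
  fixes A :: mat
  assumes "m > 0"
  obtains z w where "\<exists>i<m. w i \<noteq> 0" "\<forall>i<m. (\<Sum>j<m. complex_of_real (A i j) * w j) = z * w i"
proof -
  define A' :: "complex Matrix.mat" where "A' = Matrix.mat m m (\<lambda>(i, j). complex_of_real (A i j))"
  have A': "A' \<in> carrier_mat m m"
    unfolding A'_def by simp
  have "degree (char_poly A') = m"
    using degree_monic_char_poly[OF A'] by simp
  then have "\<not> constant (poly (char_poly A'))"
    using assms constant_degree[of "char_poly A'"] by simp
  then obtain z where "poly (char_poly A') z = 0"
    using fundamental_theorem_of_algebra by blast
  then have "eigenvalue A' z"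
    using eigenvalue_root_char_poly[OF A'] by simp
  then obtain v where "eigenvector A' v z"
    unfolding eigenvalue_def by blast
  then have v: "v \<in> carrier_vec m" "v \<noteq> 0\<^sub>v m" "A' *\<^sub>v v = z \<cdot>\<^sub>v v"
    using A' unfolding eigenvector_def by auto
  have "\<exists>i<m. v $ i \<noteq> 0"
  proof (rule ccontr)
    assume "\<not> ?thesis"
    then have "v = 0\<^sub>v m"
      using v(1) by (intro eq_vecI) auto
    then show False
      using v(2) by simp
  qed
  moreover have "(\<Sum>j<m. complex_of_real (A i j) * v $ j) = z * v $ i" if "i < m" for i
  proof -
    have "(A' *\<^sub>v v) $ i = (\<Sum>j<m. complex_of_real (A i j) * v $ j)"
      using that v(1) unfolding A'_def by (simp add: scalar_prod_def lessThan_atLeast0)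
    then show ?thesis
      using v(3) v(1) that by simp
  qed
  ultimately show ?thesis
    using that by blast
qed

lemma symmetric_mat_eigenvalue_real:
  fixes A :: mat
  assumes sym: "symmetric_mat m A"
    and nz: "\<exists>i<m. w i \<noteq> 0" and ev: "\<forall>i<m. (\<Sum>j<m. complex_of_real (A i j) * w j) = z * w i"
  shows "Im z = 0"
proof -
  define s where "s = (\<Sum>i<m. (cmod (w i))\<^sup>2)"
  define T where "T = (\<Sum>i<m. \<Sum>j<m. complex_of_real (A i j) * (cnj (w i) * w j))"
  obtain i0 where "i0 < m" "w i0 \<noteq> 0"
    using nz by blast
  then have "0 < (cmod (w i0))\<^sup>2" "(cmod (w i0))\<^sup>2 \<le> s"
    unfolding s_def by (auto intro: member_le_sum)
  then have "s > 0"
    by linarith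
  have "T = (\<Sum>i<m. cnj (w i) * (\<Sum>j<m. complex_of_real (A i j) * w j))"
    unfolding T_def by (simp add: sum_distrib_left algebra_simps)
  also have "\<dots> = (\<Sum>i<m. z * complex_of_real ((cmod (w i))\<^sup>2))"
  proof (intro sum.cong refl)
    fix i assume "i \<in> {..<m}"
    then have "cnj (w i) * (\<Sum>j<m. complex_of_real (A i j) * w j) = z * (cnj (w i) * w i)"
      using ev by simp
    also have "cnj (w i) * w i = complex_of_real ((cmod (w i))\<^sup>2)"
      by (subst mult.commute) (rule complex_norm_square[symmetric])
    finally show "cnj (w i) * (\<Sum>j<m. complex_of_real (A i j) * w j) = z * complex_of_real ((cmod (w i))\<^sup>2)" .
  qed
  also have "\<dots> = z * complex_of_real s"
    unfolding s_def by (simp add: sum_distrib_left)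
  finally have T: "T = z * complex_of_real s" .
  have "cnj T = (\<Sum>i<m. \<Sum>j<m. complex_of_real (A i j) * (w i * cnj (w j)))"
    unfolding T_def by simp
  also have "\<dots> = (\<Sum>j<m. \<Sum>i<m. complex_of_real (A i j) * (w i * cnj (w j)))"
    by (rule sum.swap)
  also have "\<dots> = T"
    unfolding T_def using sym unfolding symmetric_mat_def by (intro sum.cong refl) (auto simp: mult.commute)
  finally have "Im T = 0"
    by (metis Reals_cnj_iff complex_is_Real_iff)
  then show ?thesis
    using T \<open>s > 0\<close> by simp
qed

lemma symmetric_mat_real_eigenvector:
  assumes sym: "symmetric_mat m A" and "m > 0"
  obtains \<mu> y where "\<exists>i<m. y i \<noteq> 0" "\<forall>i<m. mat_vec m A y i = \<mu> * y i"
proof -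
  obtain z w where nz: "\<exists>i<m. w i \<noteq> 0" and ev: "\<forall>i<m. (\<Sum>j<m. complex_of_real (A i j) * w j) = z * w i"
    using complex_eigenvector_exists[OF \<open>m > 0\<close>] .
  have "Im z = 0"
    using symmetric_mat_eigenvalue_real[OF sym nz ev] .
  then have re: "mat_vec m A (\<lambda>j. Re (w j)) i = Re z * Re (w i)"
    and im: "mat_vec m A (\<lambda>j. Im (w j)) i = Re z * Im (w i)" if "i < m" for i
    using arg_cong[OF ev[rule_format, OF that], of Re] arg_cong[OF ev[rule_format, OF that], of Im]
    by (simp_all add: mat_vec_def Re_sum Im_sum)
  obtain i0 where "i0 < m" "w i0 \<noteq> 0"
    using nz by blast
  then consider "Re (w i0) \<noteq> 0" | "Im (w i0) \<noteq> 0"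
    using complex_eq_iff by fastforce
  then show ?thesis
  proof cases
    case 1
    then show ?thesis
      using that[of "\<lambda>j. Re (w j)" "Re z"] re \<open>i0 < m\<close> by blast
  next
    case 2
    then show ?thesis
      using that[of "\<lambda>j. Im (w j)" "Re z"] im \<open>i0 < m\<close> by blast
  qed
qed

lemma sum_lessThan_add:
  fixes k d :: nat
  shows "(\<Sum>i<k + d. f i) = (\<Sum>i<k. f i) + (\<Sum>a<d. f (k + a))"
  by (induction d) (simp_all add: add.assoc)

lemma symmetric_mat_complement_invariant:
  assumes sym: "symmetric_mat n B" and u: "orthonormal n {..<n} u" and "k + m = n"
    and ev: "\<forall>i<k. \<forall>r<n. mat_vec n B (u i) r = lam i * u i r"
    and "b < m" "r < n"
  shows "mat_vec n B (u (k + b)) r = (\<Sum>a<m. dot n (u (k + a)) (mat_vec n B (u (k + b))) * u (k + a) r)"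
proof -
  have "dot n (u i) (mat_vec n B (u (k + b))) = 0" if "i < k" for i
  proof -
    have "dot n (u i) (mat_vec n B (u (k + b))) = dot n (\<lambda>r. lam i * u i r) (u (k + b))"
      using that ev dot_mat_vec_symmetric[OF sym] \<open>k + m = n\<close> by (auto intro!: dot_cong)
    also have "\<dots> = 0"
      using u that \<open>b < m\<close> \<open>k + m = n\<close> unfolding orthonormal_def dot_scale_left by auto
    finally show ?thesis .
  qed
  then show ?thesis
    using orthonormal_expansion[OF u \<open>r < n\<close>, of "mat_vec n B (u (k + b))"]
    unfolding \<open>k + m = n\<close>[symmetric] sum_lessThan_add by simp
qed

lemma mat_vec_compression_eigenvector:
  assumes "\<forall>b<m. \<forall>r<n. mat_vec n B (w b) r = (\<Sum>a<m. Cm a b * w a r)"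
    and "\<forall>a<m. mat_vec m Cm y a = \<mu> * y a" and "r < n"
  shows "mat_vec n B (\<lambda>r. \<Sum>b<m. y b * w b r) r = \<mu> * (\<Sum>b<m. y b * w b r)"
proof -
  have "mat_vec n B (\<lambda>r. \<Sum>b<m. y b * w b r) r = (\<Sum>b<m. y b * (\<Sum>a<m. Cm a b * w a r))"
    unfolding mat_vec_sum using assms(1,3) by simp
  also have "\<dots> = (\<Sum>a<m. mat_vec m Cm y a * w a r)"
    unfolding mat_vec_def sum_distrib_left sum_distrib_right
    by (subst sum.swap) (simp add: mult_ac)
  also have "\<dots> = \<mu> * (\<Sum>b<m. y b * w b r)"
    using assms(2) by (simp add: sum_distrib_left mult_ac)
  finally show ?thesis .
qed

text \<open>The compression of B to the invariant complement of the eigenvectors found so far is again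
  symmetric, so it has a real eigenvector.\<close>

lemma symmetric_mat_eigenvector_orthogonal:
  assumes sym: "symmetric_mat n B" and "k < n"
    and v: "orthonormal n {..<k} v" and ev: "\<forall>i<k. \<forall>r<n. mat_vec n B (v i) r = lam i * v i r"
  obtains z \<mu> where "dot n z z = 1" "\<forall>i<k. dot n (v i) z = 0" "\<forall>r<n. mat_vec n B z r = \<mu> * z r"
proof -
  obtain u where u_v: "\<forall>i\<in>{..<k}. u i = v i" and u: "orthonormal n {..<n} u"
    using orthonormal_complete[OF _ v] \<open>k < n\<close> by auto
  define m where "m = n - k"
  define w where "w b = u (k + b)" for b
  define Cm where "Cm a b = dot n (w a) (mat_vec n B (w b))" for a b
  have n: "k + m = n"
    using \<open>k < n\<close> unfolding m_def by simp
  have w: "orthonormal n {..<m} w"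
    using u unfolding orthonormal_def w_def n[symmetric] by auto
  have u_w: "dot n (u i) (w b) = 0" if "i < k" "b < m" for i b
    using u that unfolding orthonormal_def w_def n[symmetric] by auto
  have ev_u: "\<forall>i<k. \<forall>r<n. mat_vec n B (u i) r = lam i * u i r"
    using ev u_v by simp
  have B_w: "\<forall>b<m. \<forall>r<n. mat_vec n B (w b) r = (\<Sum>a<m. Cm a b * w a r)"
    using symmetric_mat_complement_invariant[OF sym u n ev_u] unfolding Cm_def w_def by simp
  have "symmetric_mat m Cm"
    unfolding symmetric_mat_def Cm_def using dot_mat_vec_symmetric[OF sym] dot_commute by metis
  moreover have "m > 0"
    using \<open>k < n\<close> unfolding m_def by simp
  ultimately obtain \<mu> y where y: "\<exists>a<m. y a \<noteq> 0" "\<forall>a<m. mat_vec m Cm y a = \<mu> * y a"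
    by (rule symmetric_mat_real_eigenvector)
  define x where "x r = (\<Sum>b<m. y b * w b r)" for r
  have x_ev: "mat_vec n B x r = \<mu> * x r" if "r < n" for r
    unfolding x_def[abs_def] using mat_vec_compression_eigenvector[OF B_w y(2) that] by simp
  have x_u: "dot n (u i) x = 0" if "i < k" for i
    unfolding x_def[abs_def] dot_sum_right using u_w that by simp
  have "dot n x x = (\<Sum>b<m. (y b)\<^sup>2)"
    unfolding x_def[abs_def] by (rule dot_orthonormal_combination[OF _ w]) simp
  also have "\<dots> \<noteq> 0"
    using y(1) by (auto simp: sum_nonneg_eq_0_iff)
  finally obtain c where "dot n (\<lambda>r. c * x r) (\<lambda>r. c * x r) = 1"
    by (rule exists_unit_multiple)
  moreover have "\<forall>i<k. dot n (v i) (\<lambda>r. c * x r) = 0"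
    using x_u u_v by (simp add: dot_scale_right)
  moreover have "\<forall>r<n. mat_vec n B (\<lambda>r. c * x r) r = \<mu> * (c * x r)"
    using x_ev by (simp add: mat_vec_scale)
  ultimately show ?thesis
    using that by blast
qed

theorem symmetric_mat_orthonormal_eigenbasis:
  assumes "symmetric_mat n B"
  obtains v lam where "orthonormal n {..<n} v" "\<forall>i<n. \<forall>r<n. mat_vec n B (v i) r = lam i * v i r"
proof -
  have "k \<le> n \<Longrightarrow> \<exists>v lam. orthonormal n {..<k} v \<and> (\<forall>i<k. \<forall>r<n. mat_vec n B (v i) r = lam i * v i r)"
    for k
  proof (induction k)
    case 0
    then show ?case
      unfolding orthonormal_def by simp
  next
    case (Suc k)
    then obtain v lam where v: "orthonormal n {..<k} v" and ev: "\<forall>i<k. \<forall>r<n. mat_vec n B (v i) r = lam i * v i r"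
      by auto
    obtain z \<mu> where "dot n z z = 1" "\<forall>i<k. dot n (v i) z = 0" and z: "\<forall>r<n. mat_vec n B z r = \<mu> * z r"
      using symmetric_mat_eigenvector_orthogonal[OF assms _ v ev] Suc.prems by auto
    then have "orthonormal n {..<Suc k} (v(k := z))"
      using orthonormal_insert[OF v] by (simp add: lessThan_Suc)
    moreover have "\<forall>i<Suc k. \<forall>r<n. mat_vec n B ((v(k := z)) i) r = (lam(k := \<mu>)) i * (v(k := z)) i r"
      using ev z less_Suc_eq by auto
    ultimately show ?case
      by blast
  qed
  then show ?thesis
    using that by blast
qed

lemma dot_mat_vec_gram:
  "dot n (mat_vec n G x) (mat_vec n G y) = dot n x (mat_vec n (mmul n (mtrans G) G) y)"
proof -
  have "dot n (mat_vec n G x) (mat_vec n G y) = (\<Sum>r<n. \<Sum>l<n. \<Sum>k<n. x k * (G r k * G r l * y l))"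
    unfolding dot_def mat_vec_def by (simp add: sum_distrib_left sum_distrib_right mult_ac)
  also have "\<dots> = (\<Sum>l<n. \<Sum>r<n. \<Sum>k<n. x k * (G r k * G r l * y l))"
    by (rule sum.swap)
  also have "\<dots> = (\<Sum>l<n. \<Sum>k<n. \<Sum>r<n. x k * (G r k * G r l * y l))"
    by (rule sum.cong[OF refl], rule sum.swap)
  also have "\<dots> = (\<Sum>k<n. \<Sum>l<n. \<Sum>r<n. x k * (G r k * G r l * y l))"
    by (rule sum.swap)
  also have "\<dots> = dot n x (mat_vec n (mmul n (mtrans G) G) y)"
    unfolding dot_def mat_vec_def mmul_def mtrans_def by (simp add: sum_distrib_left sum_distrib_right mult_ac)
  finally show ?thesis .
qed

lemma orthonormal_mat_expansion:
  assumes "orthonormal n {..<n} v" "j < n"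
  shows "G i j = (\<Sum>a<n. mat_vec n G (v a) i * v a j)"
  using orthonormal_expansion[OF assms, of "G i"]
  unfolding dot_def mat_vec_def by (simp add: mult.commute)

lemma orthogonal_family_normalize:
  assumes g: "\<forall>i<n. \<forall>j<n. dot n (g i) (g j) = (if i = j then lam j else 0)"
  obtains u where "orthonormal n {..<n} u" "\<forall>a<n. \<forall>r<n. sqrt (lam a) * u a r = g a r"
proof -
  define I where "I = {j. j < n \<and> lam j > 0}"
  define u where "u j = (\<lambda>r. 1 / sqrt (lam j) * g j r)" for j
  have "orthonormal n I u"
    unfolding orthonormal_def u_def dot_scale_left dot_scale_right
    using g unfolding I_def by (auto simp: real_sqrt_mult[symmetric])
  then obtain u' where u'_u: "\<forall>i\<in>I. u' i = u i" and u': "orthonormal n {..<n} u'"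
    using orthonormal_complete[of I n u] unfolding I_def by blast
  have "sqrt (lam a) * u' a r = g a r" if "a < n" "r < n" for a r
  proof (cases "a \<in> I")
    case True
    then show ?thesis
      using u'_u unfolding u_def I_def by simp
  next
    case False
    then have "lam a = 0"
      using g dot_self_nonneg[of n "g a"] that unfolding I_def by fastforce
    then have "g a r = 0"
      using g dot_self_eq_0D[of n "g a" r] that by simp
    then show ?thesis
      using \<open>lam a = 0\<close> by simp
  qed
  then show ?thesis
    using that u' by blast
qed

theorem svd_exists:
  obtains U S V where "is_svd n G U S V"
proof -
  have "symmetric_mat n (mmul n (mtrans G) G)"
    unfolding symmetric_mat_def mmul_def mtrans_def by (simp add: mult.commute)
  then obtain v lam where v: "orthonormal n {..<n} v"
    and ev: "\<forall>i<n. \<forall>r<n. mat_vec n (mmul n (mtrans G) G) (v i) r = lam i * v i r"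
    by (rule symmetric_mat_orthonormal_eigenbasis)
  have g: "\<forall>i<n. \<forall>j<n. dot n (mat_vec n G (v i)) (mat_vec n G (v j)) = (if i = j then lam j else 0)"
  proof (intro allI impI)
    fix i j assume "i < n" "j < n"
    then have "dot n (mat_vec n G (v i)) (mat_vec n G (v j)) = dot n (v i) (\<lambda>r. lam j * v j r)"
      unfolding dot_mat_vec_gram using ev by (intro dot_cong) simp_all
    then show "dot n (mat_vec n G (v i)) (mat_vec n G (v j)) = (if i = j then lam j else 0)"
      using v \<open>i < n\<close> \<open>j < n\<close> unfolding orthonormal_def by (simp add: dot_scale_right)
  qed
  then obtain u where u: "orthonormal n {..<n} u"
    and su: "\<forall>a<n. \<forall>r<n. sqrt (lam a) * u a r = mat_vec n G (v a) r"
    by (rule orthogonal_family_normalize)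
  have lam: "lam i \<ge> 0" if "i < n" for i
    using g[rule_format, OF that that] dot_self_nonneg[of n "mat_vec n G (v i)"] by simp
  define S where "S i j = (if i = j then sqrt (lam i) else 0)" for i j
  have S: "\<forall>i<n. \<forall>j<n. i \<noteq> j \<longrightarrow> S i j = 0"
    unfolding S_def by simp
  have "G i j = mmul n (mmul n (\<lambda>r j. u j r) S) (mtrans (\<lambda>r j. v j r)) i j"
    if "i < n" "j < n" for i j
    unfolding mmul_diagonal_mtrans[OF S] orthonormal_mat_expansion[OF v \<open>j < n\<close>, of G i]
    using su that by (intro sum.cong refl) (simp add: S_def mult_ac)
  moreover have "\<forall>i<n. S i i \<ge> 0"
    unfolding S_def using lam by simp
  ultimately have "is_svd n G (\<lambda>r j. u j r) S (\<lambda>r j. v j r)"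
    unfolding is_svd_def orthogonal_mat_iff_orthonormal using u v S by simp
  then show ?thesis
    using that by blast
qed

section \<open>The matrix sign as an odd matrix polynomial\<close>

primrec odd_power :: "nat \<Rightarrow> mat \<Rightarrow> nat \<Rightarrow> mat" where
  "odd_power n G 0 = G"
| "odd_power n G (Suc k) = mmul n (mmul n (odd_power n G k) (mtrans G)) G"

lemma is_svd_entries:
  assumes "is_svd n G U S V" "i < n" "j < n"
  shows "G i j = (\<Sum>l<n. U i l * S l l * V j l)"
  using assms mmul_diagonal_mtrans[of n S U V] unfolding is_svd_def by simp

lemma odd_power_svd:
  assumes svd: "is_svd n G U S V" and "i < n" "j < n"
  shows "odd_power n G k i j = (\<Sum>l<n. U i l * S l l ^ (2 * k + 1) * V j l)"
  using assms(2,3)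
proof (induction k arbitrary: j)
  case 0
  then show ?case
    using is_svd_entries[OF svd] by simp
next
  case (Suc k)
  have U: "orthogonal_mat n U" and V: "orthogonal_mat n V"
    using svd unfolding is_svd_def by auto
  have step: "mmul n (odd_power n G k) (mtrans G) i a = (\<Sum>l<n. U i l * S l l ^ (2 * k + 2) * U a l)"
    if "a < n" for a
  proof -
    have "mmul n (odd_power n G k) (mtrans G) i a
        = dot n (mat_vec n V (\<lambda>l. U i l * S l l ^ (2 * k + 1))) (mat_vec n V (\<lambda>l. U a l * S l l))"
      unfolding mmul_def mtrans_def dot_def mat_vec_def
      using Suc.IH is_svd_entries[OF svd that] Suc.prems(1) by (intro sum.cong refl) (simp add: mult_ac)
    also have "\<dots> = (\<Sum>l<n. U i l * S l l ^ (2 * k + 2) * U a l)"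
      by (simp only: orthogonal_mat_dot[OF V]) (simp add: dot_def mult_ac)
    finally show ?thesis .
  qed
  have "odd_power n G (Suc k) i j
      = dot n (mat_vec n U (\<lambda>l. U i l * S l l ^ (2 * k + 2))) (mat_vec n U (\<lambda>l. S l l * V j l))"
    unfolding odd_power.simps mmul_def[of n "mmul n _ _"] dot_def mat_vec_def
    using step is_svd_entries[OF svd _ Suc.prems(2)] by (intro sum.cong refl) (simp add: mult_ac)
  also have "\<dots> = (\<Sum>l<n. U i l * S l l ^ (2 * Suc k + 1) * V j l)"
    by (simp only: orthogonal_mat_dot[OF U]) (simp add: dot_def mult_ac)
  finally show ?case .
qed

lemma poly_interpolation_exists:
  fixes f :: "real \<Rightarrow> real"
  assumes "finite X"
  obtains p where "\<forall>x\<in>X. poly p x = f x"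
  using assms
proof (induction X arbitrary: thesis rule: finite_induct)
  case empty
  then show ?case
    by simp
next
  case (insert a X)
  obtain p where p: "\<forall>x\<in>X. poly p x = f x"
    using insert.IH by blast
  define q where "q = (\<Prod>x\<in>X. [:-x, 1:])"
  have q: "poly q x = (\<Prod>y\<in>X. x - y)" for x
    unfolding q_def by (simp add: poly_prod)
  have "poly q a \<noteq> 0" and "\<forall>x\<in>X. poly q x = 0"
    unfolding q using insert.hyps by auto
  then have "\<forall>x\<in>insert a X. poly (p + Polynomial.smult ((f a - poly p a) / poly q a) q) x = f x"
    using p by auto
  then show ?case
    using insert.prems by blast
qed

text \<open>Interpolate 1 / sqrt at the squares of the nonzero points: the polynomial P then satisfies
  s * P (s^2) = sgn s.\<close>

lemma sgn_odd_polynomial: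
  fixes X :: "real set"
  assumes "finite X"
  obtains N c where "\<forall>s\<in>X. (\<Sum>k<N. c k * s ^ (2 * k + 1)) = sgn s"
proof -
  have "finite ((\<lambda>s. s\<^sup>2) ` (X - {0}))"
    using assms by simp
  then obtain p where p: "\<forall>y\<in>(\<lambda>s. s\<^sup>2) ` (X - {0}). poly p y = 1 / sqrt y"
    by (rule poly_interpolation_exists)
  have "(\<Sum>k<Suc (degree p). coeff p k * s ^ (2 * k + 1)) = sgn s" if "s \<in> X" for s
  proof -
    have "s ^ (2 * k + 1) = s * (s\<^sup>2) ^ k" for k
      by (simp add: power_mult[symmetric])
    then have "(\<Sum>k<Suc (degree p). coeff p k * s ^ (2 * k + 1)) = s * poly p (s\<^sup>2)"
      unfolding poly_altdef lessThan_Suc_atMost sum_distrib_left by (simp only: mult.left_commute)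
    also have "\<dots> = sgn s"
    proof (cases "s = 0")
      case False
      then have "poly p (s\<^sup>2) = 1 / \<bar>s\<bar>"
        using p that by simp
      then show ?thesis
        using False by (simp add: sgn_if)
    qed simp
    finally show ?thesis .
  qed
  then show ?thesis
    using that by blast
qed

lemma msgn_svd:
  obtains U S V where "is_svd n G U S V"
    "msgn n G = mmul n (mmul n U (\<lambda>i j. sgn (S i j))) (mtrans V)"
proof -
  define T where "T = (SOME (U, S, V). is_svd n G U S V)"
  obtain U S V where T: "T = (U, S, V)"
    by (cases T)
  obtain U0 S0 V0 where "is_svd n G U0 S0 V0"
    by (rule svd_exists)
  then have "case (U0, S0, V0) of (U, S, V) \<Rightarrow> is_svd n G U S V"
    by simp
  then have "case T of (U, S, V) \<Rightarrow> is_svd n G U S V"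
    unfolding T_def by (rule someI)
  moreover have "msgn n G = mmul n (mmul n U (\<lambda>i j. sgn (S i j))) (mtrans V)"
    unfolding msgn_def T_def[symmetric] T by simp
  ultimately show ?thesis
    using that T by simp
qed

theorem msgn_odd_polynomial:
  obtains N c where "\<forall>i<n. \<forall>j<n. msgn n G i j = (\<Sum>k<N. c k * odd_power n G k i j)"
proof -
  obtain U S V where svd: "is_svd n G U S V"
    and ms: "msgn n G = mmul n (mmul n U (\<lambda>i j. sgn (S i j))) (mtrans V)"
    by (rule msgn_svd)
  have "finite ((\<lambda>l. S l l) ` {..<n})"
    by simp
  then obtain N c where c: "\<forall>s\<in>(\<lambda>l. S l l) ` {..<n}. (\<Sum>k<N. c k * s ^ (2 * k + 1)) = sgn s"
    by (rule sgn_odd_polynomial)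
  have diag: "\<forall>i<n. \<forall>j<n. i \<noteq> j \<longrightarrow> S i j = 0" "\<forall>i<n. \<forall>j<n. i \<noteq> j \<longrightarrow> sgn (S i j) = 0"
    using svd unfolding is_svd_def by simp_all
  have "msgn n G i j = (\<Sum>k<N. c k * odd_power n G k i j)" if "i < n" "j < n" for i j
  proof -
    have "(\<Sum>k<N. c k * odd_power n G k i j) = (\<Sum>l<n. U i l * (\<Sum>k<N. c k * S l l ^ (2 * k + 1)) * V j l)"
      unfolding odd_power_svd[OF svd that] sum_distrib_left sum_distrib_right
      by (subst sum.swap) (simp add: mult_ac)
    also have "\<dots> = msgn n G i j"
      unfolding ms mmul_diagonal_mtrans[OF diag(2)] using c by simp
    finally show ?thesis
      by simp
  qed
  then show ?thesis
    using that by blast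
qed

lemma msgn_cong:
  assumes "mat_eq_on n G G'"
  shows "msgn n G = msgn n G'"
proof -
  have "is_svd n G = is_svd n G'"
    using assms unfolding mat_eq_on_def is_svd_def by (intro ext) simp
  then show ?thesis
    unfolding msgn_def by simp
qed

lemma odd_power_conj:
  assumes Et: "orthogonal_mat n Et" and E: "orthogonal_mat n E"
  shows "odd_power n (mmul n (mmul n Et H) (mtrans E)) k = mmul n (mmul n Et (odd_power n H k)) (mtrans E)"
proof (induction k)
  case 0
  show ?case
    by simp
next
  case (Suc k)
  let ?G = "mmul n (mmul n Et H) (mtrans E)" and ?Q = "odd_power n H k"
  have "odd_power n ?G (Suc k)
      = mmul n (mmul n (mmul n (mmul n Et ?Q) (mtrans E)) (mmul n E (mmul n (mtrans H) (mtrans Et)))) ?G"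
    using Suc.IH by (simp add: mtrans_mmul mmul_assoc)
  also have "\<dots> = mmul n (mmul n (mmul n (mmul n Et ?Q) (mtrans H)) (mtrans Et)) (mmul n Et (mmul n H (mtrans E)))"
    unfolding mmul_mtrans_orthogonal_cancel[OF E] by (simp add: mmul_assoc)
  also have "\<dots> = mmul n (mmul n Et (odd_power n H (Suc k))) (mtrans E)"
    unfolding mmul_mtrans_orthogonal_cancel[OF Et] by (simp add: mmul_assoc)
  finally show ?case .
qed

theorem msgn_conj_odd_polynomial:
  assumes Et: "orthogonal_mat n Et" and E: "orthogonal_mat n E"
    and G: "mat_eq_on n G (mmul n (mmul n Et H) (mtrans E))"
  obtains N c where
    "mat_eq_on n (mmul n (mmul n (mtrans Et) (msgn n G)) E) (\<lambda>i j. \<Sum>k<N. c k * odd_power n H k i j)"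
proof -
  let ?G = "mmul n (mmul n Et H) (mtrans E)"
  obtain N c where c: "\<forall>i<n. \<forall>j<n. msgn n ?G i j = (\<Sum>k<N. c k * odd_power n ?G k i j)"
    by (rule msgn_odd_polynomial)
  have "mmul n (mmul n (mtrans Et) (msgn n G)) E
      = mmul n (mmul n (mtrans Et) (\<lambda>i j. \<Sum>k<N. c k * odd_power n ?G k i j)) E"
    unfolding msgn_cong[OF G] using c by (intro mmul_mat_eq_on_middle) (simp add: mat_eq_on_def)
  then have "mmul n (mmul n (mtrans Et) (msgn n G)) E i j
      = (\<Sum>k<N. c k * mmul n (mmul n (mtrans Et) (mmul n (mmul n Et (odd_power n H k)) (mtrans E))) E i j)"
    for i j
    by (simp add: mmul_lincomb odd_power_conj[OF Et E])
  then have "mat_eq_on n (mmul n (mmul n (mtrans Et) (msgn n G)) E) (\<lambda>i j. \<Sum>k<N. c k * odd_power n H k i j)"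
    using orthogonal_mat_conj_cancel[OF Et E] unfolding mat_eq_on_def by simp
  then show ?thesis
    using that by blast
qed

section \<open>The gradient of the cross-entropy loss\<close>

definition logit_grad :: "nat \<Rightarrow> (nat \<Rightarrow> real) \<Rightarrow> mat \<Rightarrow> mat \<Rightarrow> mat \<Rightarrow> mat" where
  "logit_grad K p Et E W = (\<lambda>k j. p j * (phat K Et E W k j - (if k = j then 1 else 0)))"

lemma logit_eq_mmul: "logit K Et E W i j = mmul K (mmul K (mtrans Et) W) E i j"
  unfolding logit_def mmul_def mtrans_def sum_distrib_right by (rule sum.swap)

lemma logit_perturb:
  assumes "a < K" "b < K"
  shows "logit K Et E (\<lambda>x y. W x y + s * (if x = a \<and> y = b then 1 else 0)) i j
           = logit K Et E W i j + s * (Et a i * E b j)"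
proof -
  have "(\<Sum>x<K. \<Sum>y<K. Et x i * (s * (if x = a \<and> y = b then 1 else 0)) * E y j)
      = (\<Sum>x<K. \<Sum>y<K. if y = b then if x = a then s * (Et a i * E b j) else 0 else 0)"
    by (intro sum.cong refl) simp
  also have "\<dots> = s * (Et a i * E b j)"
    using assms by simp
  finally have "(\<Sum>x<K. \<Sum>y<K. Et x i * (s * (if x = a \<and> y = b then 1 else 0)) * E y j)
      = s * (Et a i * E b j)" .
  then show ?thesis
    unfolding logit_def by (simp add: distrib_left distrib_right sum.distrib)
qed

lemma cross_entropy_has_derivative:
  fixes L c :: mat and p :: "nat \<Rightarrow> real"
  assumes "K > 0"
  defines "Z \<equiv> \<lambda>j. \<Sum>k<K. exp (L k j)"
  shows "((\<lambda>s. - (\<Sum>j<K. p j * ln (exp (L j j + s * c j j) / (\<Sum>k<K. exp (L k j + s * c k j)))))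
           has_real_derivative
           (\<Sum>j<K. \<Sum>k<K. c k j * (p j * (exp (L k j) / Z j - (if k = j then 1 else 0))))) (at 0)"
proof -
  have pos: "(\<Sum>k<K. exp (L k j + s * c k j)) > 0" for s j
    using assms(1) by (intro sum_pos) auto
  have "(\<lambda>s. - (\<Sum>j<K. p j * ln (exp (L j j + s * c j j) / (\<Sum>k<K. exp (L k j + s * c k j)))))
      = (\<lambda>s. - (\<Sum>j<K. p j * (L j j + s * c j j - ln (\<Sum>k<K. exp (L k j + s * c k j)))))"
    using pos by (simp add: ln_div less_imp_neq[symmetric])
  moreover have "((\<lambda>s. - (\<Sum>j<K. p j * (L j j + s * c j j - ln (\<Sum>k<K. exp (L k j + s * c k j)))))
      has_real_derivative - (\<Sum>j<K. p j * (c j j - (\<Sum>k<K. exp (L k j) * c k j) / Z j))) (at 0)"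
    unfolding Z_def using pos[where s = 0] by (auto intro!: derivative_eq_intros simp: mult.commute)
  moreover have "- (\<Sum>j<K. p j * (c j j - (\<Sum>k<K. exp (L k j) * c k j) / Z j))
      = (\<Sum>j<K. \<Sum>k<K. c k j * (p j * (exp (L k j) / Z j - (if k = j then 1 else 0))))"
    by (simp add: sum_distrib_left sum_subtractf sum_divide_distrib algebra_simps
        flip: sum_negf) (simp add: if_distrib cong: if_cong)
  ultimately show ?thesis
    by simp
qed

theorem grad_loss:
  assumes "K > 0" "a < K" "b < K"
  shows "grad (loss K p Et E) W a b = mmul K (mmul K Et (logit_grad K p Et E W)) (mtrans E) a b"
proof -
  let ?L = "logit K Et E W" and ?c = "\<lambda>k j. Et a k * E b j"
  have "(\<lambda>s. loss K p Et E (\<lambda>x y. W x y + s * (if x = a \<and> y = b then 1 else 0)))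
      = (\<lambda>s. - (\<Sum>j<K. p j * ln (exp (?L j j + s * ?c j j) / (\<Sum>k<K. exp (?L k j + s * ?c k j)))))"
    unfolding loss_def phat_def logit_perturb[OF assms(2,3)] ..
  then have "grad (loss K p Et E) W a b
      = (\<Sum>j<K. \<Sum>k<K. ?c k j * (p j * (exp (?L k j) / (\<Sum>k'<K. exp (?L k' j)) - (if k = j then 1 else 0))))"
    unfolding grad_def using DERIV_imp_deriv[OF cross_entropy_has_derivative[OF assms(1)]] by simp
  also have "\<dots> = mmul K (mmul K Et (logit_grad K p Et E W)) (mtrans E) a b"
    unfolding mmul_def mtrans_def logit_grad_def phat_def sum_distrib_right by (simp add: mult_ac)
  finally show ?thesis .
qed

section \<open>Permutation symmetry of the Muon iterates\<close>

definition perm_invariant :: "nat \<Rightarrow> (nat \<Rightarrow> nat) \<Rightarrow> mat \<Rightarrow> bool" where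
  "perm_invariant n \<sigma> A \<longleftrightarrow> (\<forall>i<n. \<forall>j<n. A (\<sigma> i) (\<sigma> j) = A i j)"

lemma perm_invariant_mmul:
  assumes \<sigma>: "\<sigma> permutes {..<n}" and "perm_invariant n \<sigma> A" "perm_invariant n \<sigma> B"
  shows "perm_invariant n \<sigma> (mmul n A B)"
  unfolding perm_invariant_def
proof (intro allI impI)
  fix i j assume "i < n" "j < n"
  have "mmul n A B (\<sigma> i) (\<sigma> j) = (\<Sum>k<n. A (\<sigma> i) (\<sigma> k) * B (\<sigma> k) (\<sigma> j))"
    unfolding mmul_def by (subst sum.permute[OF \<sigma>]) (simp add: comp_def)
  also have "\<dots> = (\<Sum>k<n. A i k * B k j)"
    using assms(2,3) \<open>i < n\<close> \<open>j < n\<close> unfolding perm_invariant_def by simp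
  finally have "mmul n A B (\<sigma> i) (\<sigma> j) = (\<Sum>k<n. A i k * B k j)" .
  then show "mmul n A B (\<sigma> i) (\<sigma> j) = mmul n A B i j"
    unfolding mmul_def .
qed

lemma perm_invariant_mtrans: "perm_invariant n \<sigma> A \<Longrightarrow> perm_invariant n \<sigma> (mtrans A)"
  unfolding perm_invariant_def mtrans_def by simp

lemma perm_invariant_odd_power:
  "\<sigma> permutes {..<n} \<Longrightarrow> perm_invariant n \<sigma> G \<Longrightarrow> perm_invariant n \<sigma> (odd_power n G k)"
  by (induction k) (simp_all add: perm_invariant_mmul perm_invariant_mtrans)

lemma perm_invariant_lincomb:
  "(\<And>k. perm_invariant n \<sigma> (F k)) \<Longrightarrow> perm_invariant n \<sigma> (\<lambda>i j. \<Sum>k<N. c k * F k i j)"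
  unfolding perm_invariant_def by simp

lemma perm_invariant_mat_eq_on:
  assumes "\<sigma> permutes {..<n}" "mat_eq_on n A B" "perm_invariant n \<sigma> B"
  shows "perm_invariant n \<sigma> A"
  using assms permutes_in_image[OF assms(1)] unfolding perm_invariant_def mat_eq_on_def
  by (metis lessThan_iff)

lemma perm_invariant_logit_grad:
  assumes \<sigma>: "\<sigma> permutes {..<K}" and p: "\<forall>j<K. p (\<sigma> j) = p j"
    and W: "perm_invariant K \<sigma> (mmul K (mmul K (mtrans Et) W) E)"
  shows "perm_invariant K \<sigma> (logit_grad K p Et E W)"
  unfolding perm_invariant_def
proof (intro allI impI)
  fix i j assume i: "i < K" and j: "j < K"
  have logit: "logit K Et E W (\<sigma> k) (\<sigma> l) = logit K Et E W k l" if "k < K" "l < K" for k l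
    using W that unfolding perm_invariant_def logit_eq_mmul by blast
  have "(\<Sum>k<K. exp (logit K Et E W k (\<sigma> j))) = (\<Sum>k<K. exp (logit K Et E W (\<sigma> k) (\<sigma> j)))"
    by (subst sum.permute[OF \<sigma>]) (simp add: comp_def)
  also have "\<dots> = (\<Sum>k<K. exp (logit K Et E W k j))"
    using logit j by simp
  finally have "phat K Et E W (\<sigma> i) (\<sigma> j) = phat K Et E W i j"
    unfolding phat_def using logit i j by simp
  moreover have "\<sigma> i = \<sigma> j \<longleftrightarrow> i = j"
    using permutes_inj[OF \<sigma>] by (auto dest: injD)
  ultimately show "logit_grad K p Et E W (\<sigma> i) (\<sigma> j) = logit_grad K p Et E W i j"
    unfolding logit_grad_def using p j by simp
qed

theorem muon_perm_invariant:
  assumes "K > 0" and \<sigma>: "\<sigma> permutes {..<K}" and p: "\<forall>j<K. p (\<sigma> j) = p j"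
    and Et: "orthogonal_mat K Et" and E: "orthogonal_mat K E"
    and W0: "perm_invariant K \<sigma> (mmul K (mmul K (mtrans Et) W0) E)"
  shows "perm_invariant K \<sigma> (mmul K (mmul K (mtrans Et) (muon K (loss K p Et E) eta W0 t)) E)"
proof (induction t)
  case 0
  then show ?case
    using W0 by simp
next
  case (Suc t)
  let ?W = "muon K (loss K p Et E) eta W0 t"
  let ?R = "logit_grad K p Et E ?W"
  have "mat_eq_on K (grad (loss K p Et E) ?W) (mmul K (mmul K Et ?R) (mtrans E))"
    using grad_loss[OF \<open>K > 0\<close>] unfolding mat_eq_on_def by blast
  then obtain N c where
    "mat_eq_on K (mmul K (mmul K (mtrans Et) (msgn K (grad (loss K p Et E) ?W))) E)
       (\<lambda>i j. \<Sum>k<N. c k * odd_power K ?R k i j)"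
    by (rule msgn_conj_odd_polynomial[OF Et E])
  moreover have "perm_invariant K \<sigma> ?R"
    using perm_invariant_logit_grad[OF \<sigma> p Suc.IH] .
  ultimately have "perm_invariant K \<sigma> (mmul K (mmul K (mtrans Et) (msgn K (grad (loss K p Et E) ?W))) E)"
    using perm_invariant_mat_eq_on[OF \<sigma>] perm_invariant_lincomb perm_invariant_odd_power[OF \<sigma>] by blast
  then show ?case
    using Suc.IH unfolding perm_invariant_def muon.simps mmul_conj_diff by simp
qed

section \<open>Block structure\<close>

lemma block_index_eq:
  fixes C i j a b :: nat
  assumes "a < C" "b < C"
  shows "i * C + a = j * C + b \<longleftrightarrow> i = j \<and> a = b"
proof
  assume h: "i * C + a = j * C + b"
  have "(i * C + a) div C = i" "(j * C + b) div C = j"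
    using assms by simp_all
  then have "i = j"
    using h by simp
  then show "i = j \<and> a = b"
    using h by simp
qed simp

lemma block_index_lt:
  fixes M C u v :: nat
  assumes "u < M" "v < C"
  shows "u * C + v < M * C"
proof -
  have "u * C + v < (u + 1) * C"
    using assms by simp
  also have "\<dots> \<le> M * C"
    using assms by (intro mult_right_mono) auto
  finally show ?thesis .
qed

lemma transpose_block_div:
  fixes C u c d :: nat
  assumes "c < C" "d < C"
  shows "Transposition.transpose (u * C + c) (u * C + d) x div C = x div C"
proof -
  have "(u * C + c) div C = u" "(u * C + d) div C = u"
    using assms by simp_all
  then show ?thesis
    by (simp add: Transposition.transpose_def)
qed

definition block_symmetric :: "nat \<Rightarrow> nat \<Rightarrow> mat \<Rightarrow> bool" where
  "block_symmetric M C A \<longleftrightarrow>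
     (\<forall>u<M. \<forall>c<C. \<forall>d<C. perm_invariant (M * C) (Transposition.transpose (u * C + c) (u * C + d)) A)"

lemma block_symmetricD:
  assumes "block_symmetric M C A" "u < M" "c < C" "d < C" "x < M * C" "y < M * C"
  shows "A (Transposition.transpose (u * C + c) (u * C + d) x) (Transposition.transpose (u * C + c) (u * C + d) y)
           = A x y"
  using assms unfolding block_symmetric_def perm_invariant_def by blast

lemma block_symmetric_diag:
  assumes "block_symmetric M C A" "i < M" "a < C"
  shows "A (i * C + a) (i * C + a) = A (i * C) (i * C)"
proof -
  have "0 < C"
    using assms(3) by simp
  moreover have "i * C + a < M * C"
    using block_index_lt[OF assms(2,3)] .
  ultimately show ?thesis
    using block_symmetricD[OF assms(1,2) \<open>0 < C\<close> assms(3), of "i * C + a" "i * C + a"] by simp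
qed

lemma block_symmetric_offdiag:
  assumes A: "block_symmetric M C A" and "i < M" "j < M" "a < C" "b < C" "i \<noteq> j"
  shows "A (i * C + a) (j * C + b) = A (i * C) (j * C)"
proof -
  have "0 < C"
    using \<open>a < C\<close> by simp
  have lt: "i * C + a < M * C" "j * C + b < M * C" "i * C < M * C"
    using block_index_lt[OF \<open>i < M\<close> \<open>a < C\<close>] block_index_lt[OF \<open>j < M\<close> \<open>b < C\<close>]
      block_index_lt[OF \<open>i < M\<close> \<open>0 < C\<close>] by simp_all
  have "j * C + b \<noteq> i * C" "j * C + b \<noteq> i * C + a" "i * C \<noteq> j * C" "i * C \<noteq> j * C + b"
    using block_index_eq[of b C 0 j i] block_index_eq[of b C a j i] block_index_eq[of 0 C 0 i j]
      block_index_eq[of 0 C b i j] assms \<open>0 < C\<close> by auto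
  then have "A (i * C + a) (j * C + b) = A (i * C) (j * C + b)"
    using block_symmetricD[OF A \<open>i < M\<close> \<open>0 < C\<close> \<open>a < C\<close> lt(1,2)] by (simp add: transpose_apply_other)
  also have "\<dots> = A (i * C) (j * C)"
    using block_symmetricD[OF A \<open>j < M\<close> \<open>0 < C\<close> \<open>b < C\<close> lt(3,2)] \<open>i * C \<noteq> j * C\<close>
      \<open>i * C \<noteq> j * C + b\<close> by (simp add: transpose_apply_other)
  finally show ?thesis .
qed

lemma block_symmetric_in_block:
  assumes A: "block_symmetric M C A" and "C \<ge> 2" "i < M" "a < C" "b < C" "a \<noteq> b"
  shows "A (i * C + a) (i * C + b) = A (i * C + 1) (i * C)"
proof -
  define a' where "a' = (if a = 0 then b else a)"
  have "a' \<noteq> 0" "a' < C" "0 < C" "1 < C"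
    unfolding a'_def using assms by auto
  have lt: "i * C + c < M * C" if "c < C" for c
    using block_index_lt[OF \<open>i < M\<close> that] .
  \<comment> \<open>Swap b with 0, which moves a to a', then swap a' with 1.\<close>
  have "A (i * C + a) (i * C + b) = A (i * C + a') (i * C)"
    using block_symmetricD[OF A \<open>i < M\<close> \<open>b < C\<close> \<open>0 < C\<close> lt[OF \<open>a < C\<close>] lt[OF \<open>b < C\<close>]]
      \<open>a \<noteq> b\<close> unfolding a'_def by (auto simp: transpose_apply_other)
  also have "\<dots> = A (i * C + 1) (i * C)"
    using block_symmetricD[OF A \<open>i < M\<close> \<open>a' < C\<close> \<open>1 < C\<close> lt[OF \<open>a' < C\<close>] lt[OF \<open>0 < C\<close>]]
      \<open>a' \<noteq> 0\<close> by (simp add: transpose_apply_other)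
  finally show ?thesis .
qed

lemma block_pattern:
  assumes "block_symmetric M C A" "C \<ge> 2" "i < M" "j < M" "a < C" "b < C"
  shows "A (i * C + a) (j * C + b) =
    (if i = j then (if a = b then A (i * C) (i * C) else A (i * C + 1) (i * C)) else A (i * C) (j * C))"
proof (cases "i = j")
  case True
  then show ?thesis
    using block_symmetric_diag[OF assms(1,3,5)] block_symmetric_in_block[OF assms(1,2,3,5,6)]
    by (cases "a = b") simp_all
next
  case False
  then show ?thesis
    using block_symmetric_offdiag[OF assms(1,3-6)] by simp
qed

theorem muon_iterates_block_pattern:
  fixes p :: "nat \<Rightarrow> real" and M C t :: nat and eta :: real
  assumes "C \<ge> 2" and p: "\<And>k l. k div C = l div C \<Longrightarrow> p k = p l"
    and Et: "orthogonal_mat (M * C) Et" and E: "orthogonal_mat (M * C) E"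
    and "i < M" "j < M" "a < C" "b < C"
  defines "Wh \<equiv> mmul (M * C) (mmul (M * C) (mtrans Et) (muon (M * C) (loss (M * C) p Et E) eta (\<lambda>_ _. 0) t)) E"
  shows "Wh (i * C + a) (j * C + b) =
    (if i = j then (if a = b then Wh (i * C) (i * C) else Wh (i * C + 1) (i * C)) else Wh (i * C) (j * C))"
proof (rule block_pattern[OF _ assms(1,5-8)])
  have "M * C > 0"
    using \<open>i < M\<close> \<open>C \<ge> 2\<close> by simp
  show "block_symmetric M C Wh"
    unfolding block_symmetric_def Wh_def
  proof (intro allI impI, rule muon_perm_invariant[OF \<open>M * C > 0\<close> _ _ Et E])
    fix u c d assume "u < M" "c < C" "d < C"
    then show "Transposition.transpose (u * C + c) (u * C + d) permutes {..<M * C}"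
      by (intro permutes_swap_id) (simp_all add: block_index_lt)
    show "\<forall>k<M * C. p (Transposition.transpose (u * C + c) (u * C + d) k) = p k"
      using p transpose_block_div[OF \<open>c < C\<close> \<open>d < C\<close>] by blast
    show "perm_invariant (M * C) (Transposition.transpose (u * C + c) (u * C + d))
        (mmul (M * C) (mmul (M * C) (mtrans Et) (\<lambda>_ _. 0)) E)"
      unfolding perm_invariant_def mmul_def by simp
  qed
qed

theorem lemmaD2:
  fixes M C :: nat and pt :: "nat \<Rightarrow> real" and E Et :: mat
  assumes C2: "C \<ge> 2"
    and pt_dec: "\<forall>i j. i < j \<and> j < M \<longrightarrow> pt i > pt j"
    and pt_pos: "\<forall>i<M. pt i > 0"
    and pt_sum: "(\<Sum>i<M. pt i) = 1"
    and E_orth: "orthogonal_mat (M * C) E"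
    and Et_orth: "orthogonal_mat (M * C) Et"
  shows "\<forall>t i j a b. i < M \<and> j < M \<and> a < C \<and> b < C \<longrightarrow>
    (let K = M * C;
         p = (\<lambda>k. pt (k div C) / real C);
         W = muon K (loss K p Et E) 1 (\<lambda>_ _. 0) t;
         Wh = mmul K (mmul K (mtrans Et) W) E
     in Wh (i * C + a) (j * C + b) =
        (if i = j then (if a = b then Wh (i * C) (i * C) else Wh (i * C + 1) (i * C))
         else Wh (i * C) (j * C)))"
  unfolding Let_def
  by (intro allI impI muon_iterates_block_pattern[OF C2 _ Et_orth E_orth]) auto

end
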